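(* For $t>0$ and $\alpha>0$ define \[ f_{t,\alpha}(z) \coloneqq \frac{e^{-t/(z+1)}}{(z+1)^{\alpha}},\qquad z\in\mathbb{C}_+ , \] where $(z+1)^{\alpha}$ denotes the principal branch. Then $f_{t,\alpha}\in\mathcal{B}$ for all $t,\alpha>0$. Moreover, for each fixed $\alpha>0$ there exist constants $M>0$ and $t_0>0$ such that \[ \|f_{t,\alpha}\|_{\mathcal{B}_0}\le \frac{M}{t^{\alpha/2}}\qquad\text{for all } t\ge t_0 . \]
   Context: $\mathbb{C}_+=\{\lambda\in\mathbb{C}:\operatorname{Re}\lambda>0\}$. $\mathcal{B}$ denotes the space of all holomorphic functions $f$ on $\mathbb{C}_+$ such that \[ \|f\|_{\mathcal{B}_0}\coloneqq\int_0^\infty \sup_{\eta\in\mathbb{R}}|f'(\xi+i\eta)|\,d\xi<\infty . \] *)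

theory Defs
  imports "HOL-Complex_Analysis.Complex_Analysis"
begin

definition right_half_plane :: "complex set" where
  "right_half_plane = {z. Re z > 0}"

definition B0_norm :: "(complex \<Rightarrow> complex) \<Rightarrow> ennreal" where
  "B0_norm f = (\<integral>\<^sup>+ \<xi> \<in> {0<..}. (SUP \<eta>. ennreal (cmod (deriv f (Complex \<xi> \<eta>)))) \<partial>lborel)"

definition B_space :: "(complex \<Rightarrow> complex) set" where
  "B_space = {f. f holomorphic_on right_half_plane \<and> B0_norm f < \<infinity>}"

text \<open>f_{t,alpha}(z) = exp(-t/(z+1)) / (z+1)^alpha, principal branch (complex powr uses Ln).\<close>
definition f_ta :: "real \<Rightarrow> real \<Rightarrow> complex \<Rightarrow> complex" where
  "f_ta t \<alpha> z = exp (- of_real t / (z + 1)) / (z + 1) powr (of_real \<alpha>)"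

end

theory Submission
  imports Defs "HOL-Real_Asymp.Real_Asymp"
begin

text \<open>
  With w = z + 1 one has f'(z) = f(z) (t - \<alpha> w) / w^2 and |exp (-t/w)| = exp (-t Re w / |w|^2).
  The inequality exp (-v) \<le> k^k v^(-k) turns the exponential factor into |w|^(2k) (t (\<xi> + 1))^(-k);
  taking k = \<alpha>/2 + 1 for the term t and k = \<alpha>/2 for the term \<alpha> w cancels the powers of |w| and
  gives, uniformly in \<eta>, |f'(\<xi> + i \<eta>)| \<le> C t^(-\<alpha>/2) (\<xi> + 1)^(-\<alpha>/2 - 1) with
  C = (\<alpha>/2 + 1)^(\<alpha>/2 + 1) + \<alpha> (\<alpha>/2)^(\<alpha>/2). Integrating over \<xi> > 0 bounds the seminorm by
  (2/\<alpha>) C t^(-\<alpha>/2), for every t > 0.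
\<close>

lemma powr_minus_shift:
  fixes x c :: real
  assumes "x > 0"
  shows "x powr (-c) = x * x powr (-(c + 1))"
  using powr_add[of x 1 "-(c + 1)"] assms by simp

lemma exp_minus_le_powr:
  fixes k v :: real
  assumes "k > 0" "v > 0"
  shows "exp (-v) \<le> k powr k * v powr (-k)"
proof -
  have "v / k \<le> exp (v/k)" using exp_ge_add_one_self[of "v/k"] by linarith
  hence "(v/k) powr k \<le> exp (v/k) powr k" using assms by (intro powr_mono2) auto
  also have "exp (v/k) powr k = exp v" using assms by (simp add: powr_def)
  finally have "v powr k \<le> exp v * k powr k" using assms by (simp add: powr_divide divide_le_eq)
  thus ?thesis using assms by (simp add: exp_minus powr_minus field_simps)
qed

lemma exp_div_square_mult_powr_le:
  fixes s r b :: real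
  assumes "s > 0" "r > 0" "b > 0"
  shows "exp (- s / r^2) * r powr (-b) \<le> (b/2) powr (b/2) * s powr (-b/2)"
proof -
  have "(r^2) powr (-b/2) = r powr (-b)"
    using assms by (simp add: powr_powr flip: powr_numeral)
  then have "(s / r^2) powr (-(b/2)) = s powr (-b/2) / r powr (-b)"
    using assms by (simp add: powr_divide)
  then have "exp (- s / r^2) \<le> (b/2) powr (b/2) * (s powr (-b/2) / r powr (-b))"
    using exp_minus_le_powr[of "b/2" "s/r^2"] assms by simp
  then have "exp (- s / r^2) * r powr (-b) \<le> (b/2) powr (b/2) * (s powr (-b/2) / r powr (-b)) * r powr (-b)"
    by (rule mult_right_mono) simp
  then show ?thesis using assms by simp
qed

definition f_ta_deriv_const :: "real \<Rightarrow> real" where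
  "f_ta_deriv_const a = (a/2 + 1) powr (a/2 + 1) + a * (a/2) powr (a/2)"

lemma exp_decay_estimate:
  fixes t a x r :: real
  assumes t: "t > 0" and a: "a > 0" and x: "x \<ge> 1" and r: "r \<ge> x"
  shows "exp (- t * x / r^2) / r powr a * ((t + a * r) / r^2)
           \<le> f_ta_deriv_const a * t powr (-a/2) * x powr (-(a/2 + 1))"
proof -
  have x0: "x > 0" and r0: "r > 0" using x r by auto
  have tx: "t * x > 0" using t x0 by simp
  define E where "E = exp (- (t * x) / r^2)"
  have "r powr (a + 2) = r powr a * r^2"
    using r0 by (simp add: powr_add)
  then have "r powr (-(a + 2)) = 1 / (r powr a * r^2)" and "r powr (-a) = 1 / r powr a"
    unfolding powr_minus by (simp_all add: divide_inverse)
  then have split: "exp (- t * x / r^2) / r powr a * ((t + a * r) / r^2)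
                      = t * (E * r powr (-(a + 2))) + a / r * (E * r powr (-a))"
    unfolding E_def using r0 by (simp only:) (simp add: field_simps power2_eq_square)
  have "t * (E * r powr (-(a + 2))) \<le> t * ((a + 2)/2) powr ((a + 2)/2) * (t * x) powr (-(a + 2)/2)"
    using exp_div_square_mult_powr_le[OF tx r0, of "a + 2"] t a by (simp add: E_def)
  also have "\<dots> = (a/2 + 1) powr (a/2 + 1) * t powr (-a/2) * x powr (-(a/2 + 1))"
    using t x0 by (simp add: powr_mult powr_minus_shift[of t "a/2"] add_divide_distrib diff_divide_distrib)
  finally have first: "t * (E * r powr (-(a + 2)))
                         \<le> (a/2 + 1) powr (a/2 + 1) * t powr (-a/2) * x powr (-(a/2 + 1))" .
  have "a / r * (E * r powr (-a)) \<le> a / r * ((a/2) powr (a/2) * (t * x) powr (-a/2))"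
    using exp_div_square_mult_powr_le[OF tx r0 a] a r0 by (intro mult_left_mono) (simp_all add: E_def)
  also have "\<dots> \<le> a / x * ((a/2) powr (a/2) * (t * x) powr (-a/2))"
    using a x0 r by (intro mult_right_mono divide_left_mono) auto
  also have "\<dots> = a * (a/2) powr (a/2) * t powr (-a/2) * x powr (-(a/2 + 1))"
    using t x0 by (simp add: powr_mult powr_minus_shift[of x "a/2"])
  finally have second: "a / r * (E * r powr (-a))
                          \<le> a * (a/2) powr (a/2) * t powr (-a/2) * x powr (-(a/2 + 1))" .
  show ?thesis
    unfolding split f_ta_deriv_const_def using first second by (simp add: algebra_simps)
qed

lemma has_integral_shifted_powr:
  fixes e :: real
  assumes "e < -1"
  shows "((\<lambda>x. (x + 1) powr e) has_integral - 1 / (e + 1)) {0..}"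
proof (intro has_integral_to_inf integrable_continuous_interval continuous_intros)
  define F where "F \<equiv> \<lambda>x. (x + 1) powr (e + 1) / (e + 1)"
  have "((\<lambda>x. (x + 1) powr e) has_integral (F y - F 0)) {0..y}" if "y \<ge> 0" for y
    unfolding F_def using assms
    by (intro fundamental_theorem_of_calculus that)
       (auto intro!: derivative_eq_intros simp flip: has_real_derivative_iff_has_vector_derivative)
  then have "\<forall>\<^sub>F y in at_top. integral {0..y} (\<lambda>x. (x + 1) powr e) = F y - F 0"
    by (meson eventually_at_top_linorderI integral_unique)
  moreover have "((\<lambda>y. F y - F 0) \<longlongrightarrow> - F 0) at_top"
    using assms unfolding F_def by real_asymp
  ultimately show "((\<lambda>y. integral {0..y} (\<lambda>x. (x + 1) powr e)) \<longlongrightarrow> - 1 / (e + 1)) at_top"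
    by (simp add: F_def filterlim_cong)
qed (use assms in auto)

lemma B0_norm_le_of_deriv_bound:
  fixes f :: "complex \<Rightarrow> complex" and K e :: real
  assumes e: "e < -1" and K: "K \<ge> 0"
    and bound: "\<And>\<xi> \<eta>. \<xi> > 0 \<Longrightarrow> cmod (deriv f (Complex \<xi> \<eta>)) \<le> K * (\<xi> + 1) powr e"
  shows "B0_norm f \<le> ennreal (- K / (e + 1))"
proof -
  have "B0_norm f \<le> (\<integral>\<^sup>+ \<xi>. ennreal (K * (\<xi> + 1) powr e) * indicator {0..} \<xi> \<partial>lborel)"
    unfolding B0_norm_def
  proof (rule nn_integral_mono)
    fix \<xi> :: real
    show "(SUP \<eta>. ennreal (cmod (deriv f (Complex \<xi> \<eta>)))) * indicator {0<..} \<xi>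
            \<le> ennreal (K * (\<xi> + 1) powr e) * indicator {0..} \<xi>"
    proof (cases "\<xi> > 0")
      case True
      then have "(SUP \<eta>. ennreal (cmod (deriv f (Complex \<xi> \<eta>)))) \<le> ennreal (K * (\<xi> + 1) powr e)"
        by (intro SUP_least ennreal_leI bound)
      then show ?thesis using True by simp
    qed simp
  qed
  also have "\<dots> = ennreal (K * (- 1 / (e + 1)))"
    using K by (intro nn_integral_has_integral_lebesgue' has_integral_mult_right has_integral_shifted_powr e) simp
  finally show ?thesis by simp
qed

lemma has_field_derivative_f_ta:
  fixes t a :: real and z :: complex
  assumes "Re z > -1"
  shows "(f_ta t a has_field_derivative
           exp (- of_real t / (z + 1)) / (z + 1) powr of_real a
             * ((of_real t - of_real a * (z + 1)) / (z + 1)^2)) (at z)"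
proof -
  have w: "z + 1 \<notin> \<real>\<^sub>\<le>\<^sub>0" using assms by (auto simp: complex_nonpos_Reals_iff)
  have w0: "z + 1 \<noteq> 0" using assms by (auto simp: complex_eq_iff)
  have p0: "(z + 1) powr of_real a \<noteq> 0" using w0 by (simp add: powr_def)
  have "((\<lambda>z. (z + 1) powr of_real a) has_field_derivative of_real a * (z + 1) powr (of_real a - 1)) (at z)"
    using DERIV_chain2[OF has_field_derivative_powr[OF w] DERIV_add[OF DERIV_ident DERIV_const]] by simp
  moreover have "(z + 1) powr (of_real a - 1) = (z + 1) powr of_real a / (z + 1)"
    using w0 by (simp add: powr_diff)
  ultimately have power: "((\<lambda>z. (z + 1) powr of_real a) has_field_derivative
                             of_real a * ((z + 1) powr of_real a / (z + 1))) (at z)"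
    by simp
  have exponential: "((\<lambda>z. exp (- of_real t / (z + 1))) has_field_derivative
                        exp (- of_real t / (z + 1)) * (of_real t / (z + 1)^2)) (at z)"
    by (rule derivative_eq_intros refl | simp add: w0)+ (simp add: field_simps power2_eq_square)
  have quotient_rule_simplified: "(E * (T / w^2) * P - E * (A * (P / w))) / (P * P) = E / P * ((T - A * w) / w^2)"
    if "w \<noteq> 0" "P \<noteq> 0" for E T A P w :: complex
    using that by (simp add: field_simps power2_eq_square)
  show ?thesis
    unfolding f_ta_def [abs_def]
    by (rule DERIV_divide[OF exponential power p0, THEN DERIV_cong])
       (rule quotient_rule_simplified[OF w0 p0])
qed

lemma f_ta_holomorphic_on: "f_ta t a holomorphic_on {z. Re z > -1}"
  using has_field_derivative_f_ta
  by (auto simp: holomorphic_on_open open_halfspace_Re_gt)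

lemma norm_deriv_f_ta_le:
  assumes t: "t > 0" and a: "a > 0" and \<xi>: "\<xi> > 0"
  shows "cmod (deriv (f_ta t a) (Complex \<xi> \<eta>))
           \<le> f_ta_deriv_const a * t powr (-a/2) * (\<xi> + 1) powr (-(a/2 + 1))"
proof -
  define w where "w = Complex \<xi> \<eta> + 1"
  define r where "r = cmod w"
  have Re_w: "Re w = \<xi> + 1" by (simp add: w_def)
  have deriv_eq: "deriv (f_ta t a) (Complex \<xi> \<eta>)
                    = exp (- of_real t / w) / w powr of_real a * ((of_real t - of_real a * w) / w^2)"
    unfolding w_def using \<xi> by (intro DERIV_imp_deriv has_field_derivative_f_ta) simp
  have \<xi>_r: "\<xi> + 1 \<le> r" unfolding r_def using abs_Re_le_cmod[of w] Re_w by linarith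
  have exp_part: "cmod (exp (- of_real t / w)) = exp (- t * (\<xi> + 1) / r^2)"
    using Re_divide'[of "- of_real t" w] by (simp add: norm_exp_eq_Re Re_w r_def)
  have power_part: "cmod (w powr of_real a) = r powr a"
    by (simp add: norm_powr_real_powr' r_def)
  have rational_part: "cmod ((of_real t - of_real a * w) / w^2) \<le> (t + a * r) / r^2"
  proof -
    have "cmod (of_real t - of_real a * w) \<le> t + a * r"
      using norm_triangle_ineq4[of "of_real t" "of_real a * w"] t a by (simp add: norm_mult r_def)
    then show ?thesis by (simp add: norm_divide norm_power r_def divide_right_mono)
  qed
  have "cmod (deriv (f_ta t a) (Complex \<xi> \<eta>))
          = exp (- t * (\<xi> + 1) / r^2) / r powr a * cmod ((of_real t - of_real a * w) / w^2)"
    unfolding deriv_eq by (simp only: norm_mult norm_divide exp_part power_part)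
  also have "\<dots> \<le> exp (- t * (\<xi> + 1) / r^2) / r powr a * ((t + a * r) / r^2)"
    using rational_part by (intro mult_left_mono) auto
  also have "\<dots> \<le> f_ta_deriv_const a * t powr (-a/2) * (\<xi> + 1) powr (-(a/2 + 1))"
    using exp_decay_estimate[OF t a _ \<xi>_r] \<xi> by simp
  finally show ?thesis .
qed

lemma B0_norm_f_ta_le:
  assumes t: "t > 0" and a: "a > 0"
  shows "B0_norm (f_ta t a) \<le> ennreal (f_ta_deriv_const a * (2/a) / t powr (a/2))"
proof -
  have "f_ta_deriv_const a * t powr (-a/2) \<ge> 0" using a by (simp add: f_ta_deriv_const_def)
  from B0_norm_le_of_deriv_bound[OF _ this norm_deriv_f_ta_le[OF t a]]
  have "B0_norm (f_ta t a) \<le> ennreal (- (f_ta_deriv_const a * t powr (-a/2)) / (-(a/2 + 1) + 1))"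
    using a by simp
  also have "- (f_ta_deriv_const a * t powr (-a/2)) / (-(a/2 + 1) + 1) = f_ta_deriv_const a * (2/a) / t powr (a/2)"
    using a by (simp add: powr_minus field_simps)
  finally show ?thesis .
qed

theorem lemma2p3:
  shows "(\<forall>t::real. \<forall>\<alpha>::real. t > 0 \<longrightarrow> \<alpha> > 0 \<longrightarrow> f_ta t \<alpha> \<in> B_space) \<and>
         (\<forall>\<alpha>::real. \<alpha> > 0 \<longrightarrow> (\<exists>M::real. M > 0 \<and> (\<exists>t0::real. t0 > 0 \<and>
            (\<forall>t. t \<ge> t0 \<longrightarrow> B0_norm (f_ta t \<alpha>) \<le> ennreal (M / t powr (\<alpha> / 2))))))"
proof (intro conjI allI impI)
  fix t a :: real assume t: "t > 0" and a: "a > 0"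
  have "f_ta t a holomorphic_on right_half_plane"
    by (rule holomorphic_on_subset[OF f_ta_holomorphic_on]) (auto simp: right_half_plane_def)
  moreover have "B0_norm (f_ta t a) < \<infinity>"
    using B0_norm_f_ta_le[OF t a] by (simp add: le_less_trans)
  ultimately show "f_ta t a \<in> B_space" by (simp add: B_space_def)
next
  fix a :: real assume a: "a > 0"
  then have "f_ta_deriv_const a * (2/a) > 0"
    unfolding f_ta_deriv_const_def by (intro mult_pos_pos add_pos_nonneg) auto
  then show "\<exists>M>0. \<exists>t0>0. \<forall>t\<ge>t0. B0_norm (f_ta t a) \<le> ennreal (M / t powr (a / 2))"
    using B0_norm_f_ta_le a by (intro exI[of _ "f_ta_deriv_const a * (2/a)"] conjI exI[of _ 1]) auto
qed

end
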